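(* Let $p$ be a prime, $n\ge1$, $\zeta=\zeta_{p^n}$ a primitive $p^n$th root of unity, $T=\mathbb{Z}_{(p)}[\zeta]$, $t=1-\zeta$ with valuation $v_t$. Then the tuple $\tau=(1-\zeta^j)_{j\in[0,p^n-1],\,p\nmid j}$, with $j$ in increasing order, is minimally ordered.
   Context: A tuple $(\xi_0,\dots,\xi_{r-1})$ of pairwise distinct elements of $T$ is minimally ordered if $\sum_{i\in[0,j-1]}v_t(\xi_j-\xi_i)\le\sum_{i\in[0,j-1]}v_t(\xi_k-\xi_i)$ for all $j\in[0,r-1]$ and $k\in[j+1,r-1]$. *)

theory Defs
  imports Complex_Main "HOL-Library.Extended_Nat" "HOL-Computational_Algebra.Primes"
begin

definition Zloc :: "nat \<Rightarrow> complex set" where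
  "Zloc p = {of_int a / of_int b | a b. \<not> int p dvd b}"

definition Tring :: "nat \<Rightarrow> complex \<Rightarrow> complex set" where
  "Tring p z = {(\<Sum>i<N. c i * z ^ i) | N c. \<forall>i. c i \<in> Zloc p}"

text \<open>The t-adic valuation on T, t = 1 - zeta: the supremum of all k with t^k dividing x in T
  (so v_t 0 = infinity).\<close>
definition vt :: "nat \<Rightarrow> complex \<Rightarrow> complex \<Rightarrow> enat" where
  "vt p z x = Sup {enat k | k. \<exists>y \<in> Tring p z. x = (1 - z) ^ k * y}"

definition minimally_ordered :: "complex set \<Rightarrow> (complex \<Rightarrow> enat) \<Rightarrow> complex list \<Rightarrow> bool" where
  "minimally_ordered T v xs \<longleftrightarrow> distinct xs \<and> set xs \<subseteq> T \<and>
     (\<forall>j < length xs. \<forall>k. j < k \<and> k < length xs \<longrightarrow>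
        (\<Sum>i<j. v (xs ! j - xs ! i)) \<le> (\<Sum>i<j. v (xs ! k - xs ! i)))"

end

theory Submission
  imports Defs "HOL-Computational_Algebra.Polynomial" "HOL-Number_Theory.Cong"
begin

(*
  Write m = p^e u with p not dividing u. As u is invertible modulo p^n, the elements 1 - zeta^m
  and 1 - zeta^(p^e) divide each other in T; and zeta^a is a unit. Hence, for indices y < x,
  v_t((1 - zeta^x) - (1 - zeta^y)) = g(v_p(x - y)) with g(e) = v_t(1 - zeta^(p^e)), and g is
  monotone since 1 - zeta^(p^e) divides 1 - zeta^(p^(e+1)); its actual values are never needed.
  The j-th sum of the tuple is therefore the sum of g(v_p(x - y)) over the y < x prime to p,
  where x is the j-th index. Replacing x by a later index x' prime to p can only increase it:
  for every e > 0 at most floor(x / p^e) of these y satisfy p^e | x - y, while at least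
  floor(x / p^e) of them satisfy p^e | x' - y, namely all y < x in the residue class of
  x' modulo p^e, none of which is divisible by p. Comparing the sizes of all superlevel sets
  compares the sums of the monotone g.
*)

section \<open>The ring T\<close>

lemma Zloc_of_int:
  assumes "prime p"
  shows "of_int k \<in> Zloc p"
proof -
  have "\<not> int p dvd 1"
    using assms by auto
  moreover have "(of_int k :: complex) = of_int k / of_int 1"
    by simp
  ultimately show ?thesis unfolding Zloc_def by blast
qed

lemma Zloc_uminus:
  assumes "a \<in> Zloc p"
  shows "- a \<in> Zloc p"
proof -
  obtain a1 a2 where "a = of_int a1 / of_int a2" "\<not> int p dvd a2"
    using assms unfolding Zloc_def by auto
  moreover have "- (of_int a1 / of_int a2 :: complex) = of_int (- a1) / of_int a2"
    by simp
  ultimately show ?thesis unfolding Zloc_def by blast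
qed

lemma Zloc_add:
  assumes "prime p" "a \<in> Zloc p" "b \<in> Zloc p"
  shows "a + b \<in> Zloc p"
proof -
  obtain a1 a2 where a: "a = of_int a1 / of_int a2" "\<not> int p dvd a2"
    using assms(2) unfolding Zloc_def by auto
  obtain b1 b2 where b: "b = of_int b1 / of_int b2" "\<not> int p dvd b2"
    using assms(3) unfolding Zloc_def by auto
  have "a2 \<noteq> 0" "b2 \<noteq> 0"
    using a(2) b(2) by auto
  then have "a + b = of_int (a1 * b2 + b1 * a2) / of_int (a2 * b2)"
    using a b by (simp add: field_simps)
  moreover have "\<not> int p dvd a2 * b2"
    using a b assms(1) by (simp add: prime_dvd_mult_iff)
  ultimately show ?thesis unfolding Zloc_def by blast
qed

lemma Zloc_mult:
  assumes "prime p" "a \<in> Zloc p" "b \<in> Zloc p"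
  shows "a * b \<in> Zloc p"
proof -
  obtain a1 a2 where a: "a = of_int a1 / of_int a2" "\<not> int p dvd a2"
    using assms(2) unfolding Zloc_def by auto
  obtain b1 b2 where b: "b = of_int b1 / of_int b2" "\<not> int p dvd b2"
    using assms(3) unfolding Zloc_def by auto
  have "\<not> int p dvd a2 * b2"
    using a b assms(1) by (simp add: prime_dvd_mult_iff)
  moreover have "a * b = of_int (a1 * b1) / of_int (a2 * b2)"
    using a b by simp
  ultimately show ?thesis unfolding Zloc_def by blast
qed

lemma Zloc_sum:
  assumes "prime p" "\<And>i. i \<in> A \<Longrightarrow> f i \<in> Zloc p"
  shows "sum f A \<in> Zloc p"
  using assms(2)
  by (induction A rule: infinite_finite_induct)
     (use Zloc_of_int[OF assms(1), of 0] Zloc_add[OF assms(1)] in auto)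

lemma Tring_iff_poly:
  assumes "prime p"
  shows "x \<in> Tring p z \<longleftrightarrow> (\<exists>q. (\<forall>i. coeff q i \<in> Zloc p) \<and> x = poly q z)"
proof
  assume "x \<in> Tring p z"
  then obtain N c where x: "x = (\<Sum>i<N. c i * z ^ i)" "\<forall>i. c i \<in> Zloc p"
    unfolding Tring_def by auto
  define q where "q = (\<Sum>i<N. monom (c i) i)"
  have "coeff q i = (if i < N then c i else 0)" for i
    unfolding q_def by (simp add: coeff_sum coeff_monom)
  then have "\<forall>i. coeff q i \<in> Zloc p"
    using x(2) Zloc_of_int[OF assms, of 0] by simp
  moreover have "x = poly q z"
    unfolding q_def x by (simp add: poly_sum poly_monom)
  ultimately show "\<exists>q. (\<forall>i. coeff q i \<in> Zloc p) \<and> x = poly q z" by blast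
next
  assume "\<exists>q. (\<forall>i. coeff q i \<in> Zloc p) \<and> x = poly q z"
  then obtain q where q: "\<forall>i. coeff q i \<in> Zloc p" "x = poly q z" by blast
  then have "x = (\<Sum>i<Suc (degree q). coeff q i * z ^ i)"
    by (simp add: poly_altdef lessThan_Suc_atMost)
  with q(1) show "x \<in> Tring p z" unfolding Tring_def by blast
qed

lemma Tring_zero: "prime p \<Longrightarrow> 0 \<in> Tring p z"
  using Zloc_of_int[of p 0] by (auto simp: Tring_iff_poly intro!: exI[of _ 0])

lemma Tring_power: "prime p \<Longrightarrow> z ^ k \<in> Tring p z"
  using Zloc_of_int[of p 0] Zloc_of_int[of p 1]
  by (auto simp: Tring_iff_poly coeff_monom poly_monom intro!: exI[of _ "monom 1 k"])

lemma Tring_uminus: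
  assumes "prime p" "a \<in> Tring p z"
  shows "- a \<in> Tring p z"
proof -
  obtain q where "\<forall>i. coeff q i \<in> Zloc p" "a = poly q z"
    using assms by (auto simp: Tring_iff_poly)
  then show ?thesis
    using assms(1) by (auto simp: Tring_iff_poly intro!: exI[of _ "- q"] Zloc_uminus)
qed

lemma Tring_add:
  assumes "prime p" "a \<in> Tring p z" "b \<in> Tring p z"
  shows "a + b \<in> Tring p z"
proof -
  obtain q1 q2 where "\<forall>i. coeff q1 i \<in> Zloc p" "a = poly q1 z"
    and "\<forall>i. coeff q2 i \<in> Zloc p" "b = poly q2 z"
    using assms by (auto simp: Tring_iff_poly)
  then show ?thesis
    using assms(1) by (auto simp: Tring_iff_poly intro!: exI[of _ "q1 + q2"] Zloc_add)
qed

lemma Tring_diff: "prime p \<Longrightarrow> a \<in> Tring p z \<Longrightarrow> b \<in> Tring p z \<Longrightarrow> a - b \<in> Tring p z"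
  using Tring_add[of p a z "- b"] Tring_uminus by simp

lemma Tring_one_minus_power:
  assumes "prime p"
  shows "1 - z ^ k \<in> Tring p z"
  using Tring_diff[OF assms Tring_power[OF assms] Tring_power[OF assms], of z 0 k] by simp

lemma Tring_mult:
  assumes "prime p" "a \<in> Tring p z" "b \<in> Tring p z"
  shows "a * b \<in> Tring p z"
proof -
  obtain q1 q2 where q1: "\<forall>i. coeff q1 i \<in> Zloc p" "a = poly q1 z"
    and q2: "\<forall>i. coeff q2 i \<in> Zloc p" "b = poly q2 z"
    using assms by (auto simp: Tring_iff_poly)
  have "coeff (q1 * q2) i \<in> Zloc p" for i
    unfolding coeff_mult using q1(1) q2(1) by (intro Zloc_sum Zloc_mult assms(1)) auto
  with q1(2) q2(2) show ?thesis
    using assms(1) by (auto simp: Tring_iff_poly intro!: exI[of _ "q1 * q2"])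
qed

lemma Tring_sum:
  assumes "prime p" "\<And>i. i \<in> A \<Longrightarrow> f i \<in> Tring p z"
  shows "sum f A \<in> Tring p z"
  using assms(2)
  by (induction A rule: infinite_finite_induct)
     (use Tring_zero[OF assms(1)] Tring_add[OF assms(1)] in auto)

section \<open>Valuations of differences of roots of unity\<close>

lemma vt_le_vt_mult:
  assumes "prime p" "y \<in> Tring p z"
  shows "vt p z d \<le> vt p z (d * y)"
proof -
  have "{enat k | k. \<exists>x\<in>Tring p z. d = (1 - z) ^ k * x}
    \<subseteq> {enat k | k. \<exists>x\<in>Tring p z. d * y = (1 - z) ^ k * x}"
  proof
    fix e assume "e \<in> {enat k | k. \<exists>x\<in>Tring p z. d = (1 - z) ^ k * x}"
    then obtain k x where "e = enat k" "x \<in> Tring p z" "d = (1 - z) ^ k * x"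
      by blast
    moreover from this have "x * y \<in> Tring p z" "d * y = (1 - z) ^ k * (x * y)"
      using assms Tring_mult by auto
    ultimately show "e \<in> {enat k | k. \<exists>x\<in>Tring p z. d * y = (1 - z) ^ k * x}"
      by blast
  qed
  then show ?thesis
    unfolding vt_def by (rule Sup_subset_mono)
qed

lemma vt_mult_unit:
  assumes "prime p" "u \<in> Tring p z" "w \<in> Tring p z" "u * w = 1"
  shows "vt p z (d * u) = vt p z d"
proof (rule antisym)
  have "vt p z (d * u) \<le> vt p z (d * u * w)"
    using assms(1,3) by (rule vt_le_vt_mult)
  then show "vt p z (d * u) \<le> vt p z d"
    using assms(4) by (simp add: mult.assoc)
  show "vt p z d \<le> vt p z (d * u)"
    using assms(1,2) by (rule vt_le_vt_mult)
qed

lemma vt_one_minus_power_dvd: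
  assumes "prime p" "a dvd b"
  shows "vt p z (1 - z ^ a) \<le> vt p z (1 - z ^ b)"
proof -
  obtain s where "b = a * s"
    using assms(2) ..
  then have "1 - z ^ b = (1 - z ^ a) * (\<Sum>i<s. (z ^ a) ^ i)"
    by (simp add: power_mult one_diff_power_eq)
  moreover have "(\<Sum>i<s. (z ^ a) ^ i) \<in> Tring p z"
    using assms(1) by (intro Tring_sum) (simp_all add: power_mult[symmetric] Tring_power)
  ultimately show ?thesis
    using vt_le_vt_mult[OF assms(1)] by simp
qed

lemma power_eq_power_if_cong:
  fixes z :: "'a::monoid_mult"
  assumes "z ^ N = 1" "[a = b] (mod N)"
  shows "z ^ a = z ^ b"
proof -
  have "z ^ c = z ^ (c mod N)" for c
  proof -
    have "z ^ c = (z ^ N) ^ (c div N) * z ^ (c mod N)"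
      by (simp only: power_mult[symmetric] power_add[symmetric] mult_div_mod_eq)
    then show ?thesis
      using assms(1) by simp
  qed
  then show ?thesis
    using assms(2) unfolding cong_def by metis
qed

lemma vt_one_minus_power_coprime:
  assumes "prime p" "z ^ N = 1" "coprime u N"
  shows "vt p z (1 - z ^ (a * u)) = vt p z (1 - z ^ a)"
proof (rule antisym)
  obtain x where "[u * x = 1] (mod N)"
    using cong_solve_coprime_nat assms(3) by auto
  then have "[a * u * x = a] (mod N)"
    using cong_scalar_left[of "u * x" 1 N a] by (simp add: mult.assoc)
  then have "z ^ (a * u * x) = z ^ a"
    by (rule power_eq_power_if_cong[OF assms(2)])
  moreover have "vt p z (1 - z ^ (a * u)) \<le> vt p z (1 - z ^ (a * u * x))"
    using assms(1) by (rule vt_one_minus_power_dvd) simp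
  ultimately show "vt p z (1 - z ^ (a * u)) \<le> vt p z (1 - z ^ a)"
    by simp
  show "vt p z (1 - z ^ a) \<le> vt p z (1 - z ^ (a * u))"
    using assms(1) by (rule vt_one_minus_power_dvd) simp
qed

lemma vt_one_minus_power_multiplicity:
  assumes "prime p" "z ^ (p ^ n) = 1" "0 < m"
  shows "vt p z (1 - z ^ m) = vt p z (1 - z ^ (p ^ multiplicity p m))"
proof -
  obtain u where u: "m = p ^ multiplicity p m * u" "\<not> p dvd u"
    using multiplicity_decompose' assms(1,3) by (metis not_prime_unit not_gr0)
  have "coprime u (p ^ n)"
    using u(2) assms(1) by (simp add: prime_imp_coprime coprime_commute)
  then show ?thesis
    using vt_one_minus_power_coprime[OF assms(1,2)] u(1) by metis
qed

lemma vt_power_diff_power: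
  assumes "prime p" "z ^ N = 1" "0 < N" "a \<le> b"
  shows "vt p z (z ^ a - z ^ b) = vt p z (1 - z ^ (b - a))"
proof -
  have "a + a * (N - 1) = N * a"
    using assms(3) by (cases N) simp_all
  then have "z ^ a * z ^ (a * (N - 1)) = (z ^ N) ^ a"
    by (metis power_add power_mult)
  then have "z ^ a * z ^ (a * (N - 1)) = 1"
    using assms(2) by simp
  then have "vt p z ((1 - z ^ (b - a)) * z ^ a) = vt p z (1 - z ^ (b - a))"
    using assms(1) by (intro vt_mult_unit[where w = "z ^ (a * (N - 1))"] Tring_power)
  moreover have "z ^ a - z ^ b = (1 - z ^ (b - a)) * z ^ a"
    using assms(4) by (simp add: algebra_simps flip: power_add)
  ultimately show ?thesis
    by simp
qed

lemma vt_diff_one_minus_power: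
  assumes "prime p" "z ^ (p ^ n) = 1" "a < b"
  shows "vt p z ((1 - z ^ b) - (1 - z ^ a)) = vt p z (1 - z ^ (p ^ multiplicity p (b - a)))"
proof -
  have "vt p z ((1 - z ^ b) - (1 - z ^ a)) = vt p z (1 - z ^ (b - a))"
    using vt_power_diff_power[OF assms(1,2)] assms(1,3) by (simp add: prime_gt_0_nat)
  also have "\<dots> = vt p z (1 - z ^ (p ^ multiplicity p (b - a)))"
    using assms by (intro vt_one_minus_power_multiplicity) simp_all
  finally show ?thesis .
qed

lemma mono_vt_one_minus_power_prime_power:
  "prime p \<Longrightarrow> mono (\<lambda>e. vt p z (1 - z ^ (p ^ e)))"
  by (intro monoI vt_one_minus_power_dvd le_imp_power_dvd)

section \<open>Comparing sums by counting residues\<close>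

lemma sum_mono_if_card_superlevels_le:
  fixes f :: "'a \<Rightarrow> 'c::linorder" and f' :: "'d \<Rightarrow> 'c"
    and g :: "'c \<Rightarrow> 'b::canonically_ordered_monoid_add"
  assumes "finite S" "finite S'" "mono g"
    and "\<And>e. card {y \<in> S. e \<le> f y} \<le> card {y \<in> S'. e \<le> f' y}"
  shows "(\<Sum>y\<in>S. g (f y)) \<le> (\<Sum>y\<in>S'. g (f' y))"
  using assms
proof (induction "card S" arbitrary: S S')
  \<comment> \<open>match an element of S of largest f-value with an element of S' of at least that f'-value\<close>
  case 0
  then show ?case by simp
next
  case (Suc c)
  then have "f ` S \<noteq> {}" "finite (f ` S)"
    by auto
  then obtain y0 where y0: "y0 \<in> S" "f y0 = Max (f ` S)"
    by (metis Max_in imageE)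
  have below_y0: "f y \<le> f y0" if "y \<in> S" for y
    using y0(2) \<open>finite (f ` S)\<close> that by simp
  have "0 < card {y \<in> S. f y0 \<le> f y}"
    using y0(1) Suc.prems(1) by (auto simp: card_gt_0_iff)
  then have "0 < card {y \<in> S'. f y0 \<le> f' y}"
    using Suc.prems(4)[of "f y0"] by linarith
  then obtain y1 where y1: "y1 \<in> S'" "f y0 \<le> f' y1"
    by (auto simp: card_gt_0_iff)
  have "(\<Sum>y\<in>S - {y0}. g (f y)) \<le> (\<Sum>y\<in>S' - {y1}. g (f' y))"
  proof (rule Suc.hyps)
    show "c = card (S - {y0})"
      using Suc.hyps(2) y0(1) Suc.prems(1) by simp
    fix e
    show "card {y \<in> S - {y0}. e \<le> f y} \<le> card {y \<in> S' - {y1}. e \<le> f' y}"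
    proof (cases "e \<le> f y0")
      case True
      have "card {y \<in> S - {y0}. e \<le> f y} = card ({y \<in> S. e \<le> f y} - {y0})"
        "card {y \<in> S' - {y1}. e \<le> f' y} = card ({y \<in> S'. e \<le> f' y} - {y1})"
        by (rule arg_cong[where f = card], blast)+
      moreover have "y0 \<in> {y \<in> S. e \<le> f y}" "y1 \<in> {y \<in> S'. e \<le> f' y}"
        using True y0 y1 by auto
      ultimately show ?thesis
        using Suc.prems(1,2) Suc.prems(4)[of e] by (simp only: card_Diff_singleton_if) simp
    next
      case False
      have "\<not> e \<le> f y" if "y \<in> S" for y
        using False below_y0[OF that] by (meson order.trans)
      then have "{y \<in> S - {y0}. e \<le> f y} = {}"
        by blast
      then show ?thesis
        by (simp only: card.empty le0)
    qed
  qed (use Suc.prems(1-3) in simp_all)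
  moreover have "g (f y0) \<le> g (f' y1)"
    using Suc.prems(3) y1(2) by (rule monoD)
  ultimately have "g (f y0) + (\<Sum>y\<in>S - {y0}. g (f y)) \<le> g (f' y1) + (\<Sum>y\<in>S' - {y1}. g (f' y))"
    by (rule add_mono[rotated])
  then show ?case
    using Suc.prems(1,2) y0(1) y1(1) by (simp add: sum.remove)
qed

lemma card_less_mod_eq_ge:
  fixes x q r :: nat
  assumes "r < q"
  shows "x div q \<le> card {y. y < x \<and> y mod q = r}"
proof -
  have "inj_on (\<lambda>t. r + q * t) {..<x div q}"
    using assms by (intro inj_onI) simp
  moreover have "r + q * t < x" if "t < x div q" for t
  proof -
    have "r + q * t < q * Suc t"
      using assms by simp
    also have "\<dots> \<le> q * (x div q)"
      using that by (intro mult_le_mono2) simp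
    also have "\<dots> \<le> x"
      by simp
    finally show ?thesis .
  qed
  then have "(\<lambda>t. r + q * t) ` {..<x div q} \<subseteq> {y. y < x \<and> y mod q = r}"
    using assms by auto
  ultimately show ?thesis
    using card_inj_on_le[of _ "{..<x div q}"] by fastforce
qed

lemma card_less_mod_eq_self_le:
  fixes x q :: nat
  shows "card {y. y < x \<and> y mod q = x mod q} \<le> x div q"
proof -
  let ?A = "{y. y < x \<and> y mod q = x mod q}"
  have "inj_on (\<lambda>y. y div q) ?A"
  proof (rule inj_onI)
    fix y y' assume "y \<in> ?A" "y' \<in> ?A" "y div q = y' div q"
    then have "q * (y div q) + y mod q = q * (y' div q) + y' mod q"
      by simp
    then show "y = y'"
      by (simp only: mult_div_mod_eq)
  qed
  moreover have "y div q < x div q" if "y \<in> ?A" for y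
  proof -
    from that have "y mod q = x mod q" "y < x"
      by simp_all
    then have "q * (y div q) < q * (x div q)"
      by (metis add_less_cancel_right mult_div_mod_eq)
    then show ?thesis
      by simp
  qed
  then have "(\<lambda>y. y div q) ` ?A \<subseteq> {..<x div q}"
    by auto
  ultimately show ?thesis
    using card_inj_on_le[of _ ?A "{..<x div q}"] by simp
qed

lemma card_superlevel_multiplicity_diff_le:
  fixes p x x' :: nat
  assumes "prime p" "x < x'" "\<not> p dvd x'"
  shows "card {y \<in> {y. y < x \<and> \<not> p dvd y}. e \<le> multiplicity p (x - y)}
    \<le> card {y \<in> {y. y < x \<and> \<not> p dvd y}. e \<le> multiplicity p (x' - y)}"
proof (cases "e = 0")
  case False
  define q where "q = p ^ e"
  have "0 < q" "p dvd q"
    using False assms(1) by (simp_all add: q_def prime_gt_0_nat)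
  have unit: "\<not> is_unit p"
    using assms(1) not_prime_unit by blast
  have "y mod q = x mod q" if "y < x" "e \<le> multiplicity p (x - y)" for y
  proof -
    have "q dvd x - y"
      using that unit by (simp add: q_def power_dvd_iff_le_multiplicity)
    then show ?thesis
      using mod_eq_dvd_iff_nat[of y x q] that(1) by simp
  qed
  then have "{y \<in> {y. y < x \<and> \<not> p dvd y}. e \<le> multiplicity p (x - y)}
    \<subseteq> {y. y < x \<and> y mod q = x mod q}"
    by auto
  then have "card {y \<in> {y. y < x \<and> \<not> p dvd y}. e \<le> multiplicity p (x - y)}
    \<le> card {y. y < x \<and> y mod q = x mod q}"
    by (rule card_mono[rotated]) simp
  also have "\<dots> \<le> x div q"
    by (rule card_less_mod_eq_self_le)
  also have "\<dots> \<le> card {y. y < x \<and> y mod q = x' mod q}"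
    using \<open>0 < q\<close> by (intro card_less_mod_eq_ge) simp
  also have "\<dots> \<le> card {y \<in> {y. y < x \<and> \<not> p dvd y}. e \<le> multiplicity p (x' - y)}"
  proof (intro card_mono subsetI)
    fix y assume y: "y \<in> {y. y < x \<and> y mod q = x' mod q}"
    then have "q dvd x' - y"
      using mod_eq_dvd_iff_nat[of y x' q] assms(2) by simp
    moreover have "\<not> p dvd y"
    proof
      assume "p dvd y"
      moreover have "p dvd x' - y"
        using \<open>p dvd q\<close> \<open>q dvd x' - y\<close> by (rule dvd_trans)
      ultimately have "p dvd (x' - y) + y"
        by (rule dvd_add[rotated])
      then show False
        using y assms(2,3) by simp
    qed
    ultimately show "y \<in> {y \<in> {y. y < x \<and> \<not> p dvd y}. e \<le> multiplicity p (x' - y)}"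
      using y assms(2) unit by (auto simp: q_def simp flip: power_dvd_iff_le_multiplicity)
  qed simp
  finally show ?thesis .
qed simp

lemma sum_multiplicity_diff_mono:
  fixes p x x' :: nat and g :: "nat \<Rightarrow> 'b::canonically_ordered_monoid_add"
  assumes "prime p" "mono g" "x < x'" "\<not> p dvd x'"
  shows "(\<Sum>y | y < x \<and> \<not> p dvd y. g (multiplicity p (x - y)))
    \<le> (\<Sum>y | y < x \<and> \<not> p dvd y. g (multiplicity p (x' - y)))"
  using assms(2) card_superlevel_multiplicity_diff_le[OF assms(1,3,4)]
  by (intro sum_mono_if_card_superlevels_le) simp_all

section \<open>Minimally ordered tuples\<close>

lemma sum_vt_diff_one_minus_power_mono:
  assumes "prime p" "z ^ (p ^ n) = 1" "x < x'" "\<not> p dvd x'"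
  shows "(\<Sum>y | y < x \<and> \<not> p dvd y. vt p z ((1 - z ^ x) - (1 - z ^ y)))
    \<le> (\<Sum>y | y < x \<and> \<not> p dvd y. vt p z ((1 - z ^ x') - (1 - z ^ y)))"
proof -
  let ?g = "\<lambda>e. vt p z (1 - z ^ (p ^ e))"
  have "(\<Sum>y | y < x \<and> \<not> p dvd y. vt p z ((1 - z ^ x) - (1 - z ^ y)))
      = (\<Sum>y | y < x \<and> \<not> p dvd y. ?g (multiplicity p (x - y)))"
    using vt_diff_one_minus_power[OF assms(1,2)] by (intro sum.cong) auto
  also have "\<dots> \<le> (\<Sum>y | y < x \<and> \<not> p dvd y. ?g (multiplicity p (x' - y)))"
    using assms(1,3,4) mono_vt_one_minus_power_prime_power[OF assms(1)]
    by (intro sum_multiplicity_diff_mono)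
  also have "\<dots> = (\<Sum>y | y < x \<and> \<not> p dvd y. vt p z ((1 - z ^ x') - (1 - z ^ y)))"
    using vt_diff_one_minus_power[OF assms(1,2)] assms(3) by (intro sum.cong) auto
  finally show ?thesis .
qed

lemma inj_on_power_if_primitive_root:
  fixes z :: "'a::field"
  assumes "z ^ N = 1" "\<And>k. 0 < k \<Longrightarrow> k < N \<Longrightarrow> z ^ k \<noteq> 1"
  shows "inj_on (\<lambda>k. z ^ k) {..<N}"
proof -
  have "z ^ a \<noteq> z ^ b" if "a < b" "b < N" for a b
  proof
    assume "z ^ a = z ^ b"
    moreover have "z ^ b = z ^ (b - a) * z ^ a"
      using that(1) by (simp flip: power_add)
    moreover have "z \<noteq> 0"
      using assms(1) that by (metis not_less_zero power_0_left zero_neq_one gr0I)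
    ultimately have "z ^ (b - a) = 1"
      by simp
    then show False
      using assms(2)[of "b - a"] that by simp
  qed
  then show ?thesis
    by (intro inj_onI) (metis lessThan_iff linorder_neqE_nat)
qed

lemma sum_lessThan_nth_sorted:
  fixes L :: "'a::linorder list"
  assumes "sorted_wrt (<) L" "j < length L"
  shows "(\<Sum>i<j. F (L ! i)) = (\<Sum>y | y \<in> set L \<and> y < L ! j. F y)"
proof -
  have "inj_on ((!) L) {..<j}"
    using assms by (intro inj_onI) (simp add: strict_sorted_iff nth_eq_iff_index_eq)
  moreover have "(!) L ` {..<j} = {y. y \<in> set L \<and> y < L ! j}"
  proof (intro equalityI subsetI)
    fix y assume "y \<in> (!) L ` {..<j}"
    then show "y \<in> {y. y \<in> set L \<and> y < L ! j}"
      using assms sorted_wrt_nth_less by fastforce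
  next
    fix y assume "y \<in> {y. y \<in> set L \<and> y < L ! j}"
    then obtain i where i: "i < length L" "L ! i = y" "y < L ! j"
      by (auto simp: in_set_conv_nth)
    then have "i < j"
      using assms sorted_wrt_nth_less[OF assms(1), of j i] by (metis linorder_neqE_nat order.asym)
    then show "y \<in> (!) L ` {..<j}"
      using i by blast
  qed
  ultimately show ?thesis
    by (metis sum.reindex_cong)
qed

lemma minimally_ordered_map_sorted:
  fixes L :: "'a::linorder list"
  assumes "sorted_wrt (<) L" "inj_on h (set L)" "h ` set L \<subseteq> T"
    and "\<And>x x'. x \<in> set L \<Longrightarrow> x' \<in> set L \<Longrightarrow> x < x' \<Longrightarrow>
      (\<Sum>y | y \<in> set L \<and> y < x. v (h x - h y)) \<le> (\<Sum>y | y \<in> set L \<and> y < x. v (h x' - h y))"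
  shows "minimally_ordered T v (map h L)"
  unfolding minimally_ordered_def
proof (intro conjI allI impI)
  show "distinct (map h L)"
    using assms(1,2) by (simp add: distinct_map strict_sorted_iff)
  show "set (map h L) \<subseteq> T"
    using assms(3) by simp
  fix j k assume jk: "j < length (map h L)" "j < k \<and> k < length (map h L)"
  have "(\<Sum>i<j. v (map h L ! j - map h L ! i)) = (\<Sum>i<j. v (h (L ! j) - h (L ! i)))"
    "(\<Sum>i<j. v (map h L ! k - map h L ! i)) = (\<Sum>i<j. v (h (L ! k) - h (L ! i)))"
    using jk by (auto intro!: sum.cong)
  moreover have "L ! j < L ! k"
    using jk assms(1) sorted_wrt_nth_less by fastforce
  ultimately show "(\<Sum>i<j. v (map h L ! j - map h L ! i)) \<le> (\<Sum>i<j. v (map h L ! k - map h L ! i))"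
    using jk assms(4)[of "L ! j" "L ! k"]
      sum_lessThan_nth_sorted[OF assms(1), of j "\<lambda>y. v (h (L ! j) - h y)"]
      sum_lessThan_nth_sorted[OF assms(1), of j "\<lambda>y. v (h (L ! k) - h y)"]
    by simp
qed

theorem lemma2p6:
  fixes p n :: nat and \<zeta> :: complex
  assumes "prime p" and "n \<ge> 1"
    and "\<zeta> ^ (p ^ n) = 1" and "\<forall>k. 0 < k \<and> k < p ^ n \<longrightarrow> \<zeta> ^ k \<noteq> 1"
  shows "minimally_ordered (Tring p \<zeta>) (vt p \<zeta>)
           (map (\<lambda>j. 1 - \<zeta> ^ j) (filter (\<lambda>j. \<not> p dvd j) [0..<p ^ n]))"
proof -
  define L where "L = filter (\<lambda>j. \<not> p dvd j) [0..<p ^ n]"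
  have set_L: "set L = {j. j < p ^ n \<and> \<not> p dvd j}"
    unfolding L_def by auto
  have primitive: "\<And>k. 0 < k \<Longrightarrow> k < p ^ n \<Longrightarrow> \<zeta> ^ k \<noteq> 1"
    using assms(4) by blast
  show ?thesis
    unfolding L_def[symmetric]
  proof (rule minimally_ordered_map_sorted)
    show "sorted_wrt (<) L"
      unfolding L_def by (simp add: sorted_wrt_filter)
    have "inj_on (\<lambda>j. \<zeta> ^ j) (set L)"
      using inj_on_power_if_primitive_root[OF assms(3) primitive]
      by (rule inj_on_subset) (auto simp: set_L)
    then show "inj_on (\<lambda>j. 1 - \<zeta> ^ j) (set L)"
      by (simp add: inj_on_def)
    show "(\<lambda>j. 1 - \<zeta> ^ j) ` set L \<subseteq> Tring p \<zeta>"
      using Tring_one_minus_power[OF assms(1)] by blast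
    fix x x' assume x: "x \<in> set L" "x' \<in> set L" "x < x'"
    have below_x: "{y. y \<in> set L \<and> y < x} = {y. y < x \<and> \<not> p dvd y}"
      using x(1) set_L by (simp only: mem_Collect_eq) (blast intro: less_trans)
    have "\<not> p dvd x'"
      using x(2) set_L by simp
    then show "(\<Sum>y | y \<in> set L \<and> y < x. vt p \<zeta> ((1 - \<zeta> ^ x) - (1 - \<zeta> ^ y)))
      \<le> (\<Sum>y | y \<in> set L \<and> y < x. vt p \<zeta> ((1 - \<zeta> ^ x') - (1 - \<zeta> ^ y)))"
      unfolding below_x by (rule sum_vt_diff_one_minus_power_mono[OF assms(1,3) x(3)])
  qed
qed

end
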